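(* Let $N\ge1$, $0<s<1$, let $G$ be an Orlicz function satisfying hypothesis (H) below with $p=\mathrm{index}(G)$, and let $u\in C_c^2(\mathbb{R}^N)$. Then for every $x\in\mathbb{R}^N$, \begin{equation*} \lim_{\delta\to0^+}\frac{p(1-s)}{G(\delta^{1-s})}\int_{B(x,\delta)}G\left(\frac{|u(x)-u(y)|}{|x-y|^{s}}\right)\frac{dy}{|x-y|^N}=K_{N,p}|\nabla u(x)|^{p}. \end{equation*}
   Context: An Orlicz function is a function $G:[0,\infty)\to[0,\infty)$ that is continuous, convex, increasing, with $G(0)=0$, satisfies $G(2t)\le \mathfrak{c}\,G(t)$ for all $t\ge0$ for some $\mathfrak{c}>2$, and $\lim_{t\to0^+}G(t)/t=0$. A positive measurable $F$ on $(0,\infty)$ is in $\mathcal{RV}_q(0)$ (regularly varying at $0$ with index $q$) if $\lim_{t\to0^+}F(\lambda t)/F(t)=\lambda^q$ for all $\lambda>0$. Hypothesis (H): $G\in\mathcal{RV}_p(0)$ is a piecewise smooth Orlicz function, $G'\in\mathcal{RV}_{p-1}(0)$, and writing $G(t)=t^p\ell(t)$, $\ell(t)\ge c_\ell>0$ for all $t>0$. $K_{N,p}=\int_{\mathbb{S}^{N-1}}|w\cdot e|^p\,d\sigma(w)$ for any unit vector $e$, $\sigma$ the surface measure. *)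

theory Defs
  imports "HOL-Analysis.Analysis"
begin

text \<open>Orlicz function (as a real function; only its values on [0,\<infinity>) matter).\<close>
definition orlicz :: "(real \<Rightarrow> real) \<Rightarrow> bool" where
  "orlicz G \<longleftrightarrow>
     continuous_on {0..} G \<and> convex_on {0..} G \<and> mono_on {0..} G \<and>
     (\<forall>t\<ge>0. G t \<ge> 0) \<and> G 0 = 0 \<and>
     (\<exists>c>2. \<forall>t\<ge>0. G (2 * t) \<le> c * G t) \<and>
     ((\<lambda>t. G t / t) \<longlongrightarrow> 0) (at_right 0)"

definition RV0 :: "real \<Rightarrow> (real \<Rightarrow> real) \<Rightarrow> bool" where
  "RV0 q F \<longleftrightarrow>
     (\<forall>t>0. F t > 0) \<and> F \<in> borel_measurable (restrict_space borel {0<..}) \<and>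
     (\<forall>a>0. ((\<lambda>t. F (a * t) / F t) \<longlongrightarrow> a powr q) (at_right 0))"

text \<open>Hypothesis (H): G is a piecewise smooth Orlicz function in RV_p(0) whose derivative
  G' (defined off a finite set of break points; any positive measurable choice there)
  is in RV_{p-1}(0), and G(t) = t^p l(t) with l bounded below by a positive constant.\<close>
definition hyp_H :: "(real \<Rightarrow> real) \<Rightarrow> real \<Rightarrow> bool" where
  "hyp_H G p \<longleftrightarrow>
     orlicz G \<and> RV0 p G \<and>
     (\<exists>G' S. finite S \<and>
        (\<forall>t\<in>{0<..} - S. (G has_real_derivative G' t) (at t)) \<and>
        continuous_on ({0<..} - S) G' \<and>
        RV0 (p - 1) G') \<and>
     (\<exists>c\<^sub>l>0. \<forall>t>0. G t / t powr p \<ge> c\<^sub>l)"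

text \<open>Surface measure on the unit sphere of a Euclidean space of dimension N, via the cone
  construction: \<sigma>(A) = N \<cdot> |{r w : 0 < r \<le> 1, w \<in> A}|.\<close>
definition sphere_measure :: "'a::euclidean_space measure" where
  "sphere_measure =
     scale_measure (ennreal (real DIM('a)))
       (distr (restrict_space lborel (ball 0 1 - {0})) (restrict_space borel (sphere 0 1))
          (\<lambda>x. x /\<^sub>R norm x))"

definition K_const :: "'a::euclidean_space itself \<Rightarrow> real \<Rightarrow> real" where
  "K_const _ p = (let e = (SOME e::'a. e \<in> Basis) in
      integral\<^sup>L sphere_measure (\<lambda>w::'a. \<bar>w \<bullet> e\<bar> powr p))"

definition C2c :: "('a::euclidean_space \<Rightarrow> real) \<Rightarrow> bool" where
  "C2c u \<longleftrightarrow>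
     (\<exists>(D :: 'a \<Rightarrow> ('a \<Rightarrow>\<^sub>L real)) (D2 :: 'a \<Rightarrow> ('a \<Rightarrow>\<^sub>L ('a \<Rightarrow>\<^sub>L real))).
        (\<forall>x. (u has_derivative blinfun_apply (D x)) (at x)) \<and>
        (\<forall>x. (D has_derivative blinfun_apply (D2 x)) (at x)) \<and>
        continuous_on UNIV D2) \<and>
     compact (closure {x. u x \<noteq> 0})"

definition grad :: "('a::euclidean_space \<Rightarrow> real) \<Rightarrow> 'a \<Rightarrow> 'a" where
  "grad u x = (\<Sum>b\<in>Basis. frechet_derivative u (at x) b *\<^sub>R b)"

end

theory Submission
  imports Defs "HOL-Probability.Probability"
begin

text \<open>Substituting \<open>y = x + \<delta> k\<close> turns the normalised integral into
  \<open>\<integral>\<^sub>B\<^sub>1 G(\<delta>\<^sup>1\<^sup>-\<^sup>s q\<^sub>\<delta>(k)) / G(\<delta>\<^sup>1\<^sup>-\<^sup>s) |k|\<^sup>-\<^sup>N dk\<close> with the difference ratio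
  \<open>q\<^sub>\<delta>(k) = |u(x+\<delta>k) - u(x)| / (\<delta> |k|\<^sup>s)\<close>, which tends to \<open>q(k) = |\<nabla>u(x)\<cdot>k| / |k|\<^sup>s\<close>.
  As \<open>G\<close> is monotone and regularly varying with index \<open>p\<close>, the integrand tends to
  \<open>q(k)\<^sup>p |k|\<^sup>-\<^sup>N\<close>; convexity, the doubling condition and the local Lipschitz bound on \<open>u\<close>
  bound it by a multiple of \<open>|k|\<^sup>1\<^sup>-\<^sup>s\<^sup>-\<^sup>N\<close>, which is integrable on the unit ball, so dominated
  convergence applies. In polar coordinates the limit
  is \<open>|\<nabla>u(x)|\<^sup>p / (p(1-s))\<close> times the sphere integral of \<open>|w\<cdot>e|\<^sup>p\<close> for \<open>e = \<nabla>u(x)/|\<nabla>u(x)|\<close>.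
  This sphere integral does not depend on the unit vector \<open>e\<close>: computing
  \<open>\<integral> |k\<cdot>e|\<^sup>p exp(-|k|\<^sup>2/2) dk\<close> in polar coordinates gives it times a radial factor, while the
  same integral is a moment of \<open>k\<cdot>e\<close>, which is standard normal under the Gaussian measure for
  every unit vector \<open>e\<close>.\<close>

section \<open>Orlicz functions and hypothesis (H)\<close>

lemma orlicz_nonneg: "orlicz G \<Longrightarrow> 0 \<le> t \<Longrightarrow> 0 \<le> G t"
  and orlicz_zero: "orlicz G \<Longrightarrow> G 0 = 0"
  and orlicz_continuous_on: "orlicz G \<Longrightarrow> continuous_on {0..} G"
  unfolding orlicz_def by auto

lemma orlicz_mono: "orlicz G \<Longrightarrow> 0 \<le> a \<Longrightarrow> a \<le> b \<Longrightarrow> G a \<le> G b"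
  unfolding orlicz_def by (auto intro: mono_onD)

lemma orlicz_scale_le:
  assumes "orlicz G" "0 \<le> l" "l \<le> 1" "0 \<le> t"
  shows "G (l * t) \<le> l * G t"
proof -
  have "G ((1 - l) *\<^sub>R 0 + l *\<^sub>R t) \<le> (1 - l) * G 0 + l * G t"
    using assms unfolding orlicz_def by (intro convex_onD) auto
  then show ?thesis using orlicz_zero[OF assms(1)] by simp
qed

lemma orlicz_doubling_power_le:
  fixes G :: "real \<Rightarrow> real"
  assumes "\<forall>t\<ge>0. G (2 * t) \<le> c * G t" "0 \<le> c" "0 \<le> t"
  shows "G (2 ^ m * t) \<le> c ^ m * G t"
proof (induction m)
  case (Suc m)
  have "G (2 ^ Suc m * t) \<le> c * G (2 ^ m * t)"
    using assms(1)[rule_format, of "2 ^ m * t"] assms(3) by (simp add: mult.assoc)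
  also have "\<dots> \<le> c ^ Suc m * G t"
    using mult_left_mono[OF Suc assms(2)] by (simp add: mult.assoc)
  finally show ?case .
qed simp

lemma orlicz_ratio_le_linear:
  assumes G: "orlicz G" and pos: "\<And>t. 0 < t \<Longrightarrow> 0 < G t"
  obtains C where "1 \<le> C" "\<And>t b. 0 < t \<Longrightarrow> 0 \<le> b \<Longrightarrow> b \<le> L \<Longrightarrow> G (t * b) / G t \<le> C * b"
proof -
  obtain c where c: "2 < c" "\<forall>t\<ge>0. G (2 * t) \<le> c * G t"
    using G unfolding orlicz_def by auto
  obtain m where m: "L < 2 ^ m" using real_arch_pow[of 2 L] by auto
  have c1: "1 \<le> c ^ m" using c by simp
  have "G (t * b) / G t \<le> c ^ m * b" if t: "0 < t" and b: "0 \<le> b" "b \<le> L" for t b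
  proof (cases "b \<le> 1")
    case True
    have "G (t * b) \<le> b * G t"
      using orlicz_scale_le[OF G b(1) True, of t] t by (simp add: mult.commute)
    then have "G (t * b) / G t \<le> b" using pos[OF t] by (simp add: divide_le_eq)
    also have "\<dots> \<le> c ^ m * b" using c1 b by (simp add: mult_le_cancel_right1)
    finally show ?thesis .
  next
    case False
    have "G (t * b) \<le> G (2 ^ m * t)"
      using b m t by (intro orlicz_mono[OF G]) (auto simp: mult.commute)
    also have "\<dots> \<le> c ^ m * G t"
      using orlicz_doubling_power_le[OF c(2)] c(1) t by simp
    finally have "G (t * b) / G t \<le> c ^ m" using pos[OF t] by (simp add: divide_le_eq)
    also have "\<dots> \<le> c ^ m * b" using False c1 mult_left_mono[of 1 b "c ^ m"] by simp
    finally show ?thesis .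
  qed
  then show thesis using that c1 by blast
qed

lemma orlicz_comp_measurable:
  assumes G: "orlicz G" and h: "h \<in> borel_measurable M" and "\<And>y. 0 \<le> h y"
  shows "(\<lambda>y. G (h y)) \<in> borel_measurable M"
proof -
  have "continuous_on UNIV (\<lambda>t. G (max 0 t))"
    by (rule continuous_on_compose2[OF orlicz_continuous_on[OF G]]) (auto intro!: continuous_intros)
  then have "(\<lambda>y. G (max 0 (h y))) \<in> borel_measurable M"
    by (intro measurable_compose[OF h] borel_measurable_continuous_onI)
  then show ?thesis using assms(3) by (simp add: max_absorb2)
qed

lemma orlicz_ratio_tendsto_0:
  assumes G: "orlicz G" and pos: "\<And>t. 0 < t \<Longrightarrow> 0 < G t"
    and tf: "\<forall>\<^sub>F z in F. 0 < tf z"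
    and bf: "(bf \<longlongrightarrow> 0) F" and bnn: "\<forall>\<^sub>F z in F. 0 \<le> bf z"
  shows "((\<lambda>z. G (tf z * bf z) / G (tf z)) \<longlongrightarrow> 0) F"
proof (rule tendsto_sandwich[OF _ _ tendsto_const bf])
  show "\<forall>\<^sub>F z in F. 0 \<le> G (tf z * bf z) / G (tf z)"
    using tf bnn by eventually_elim (simp add: orlicz_nonneg[OF G])
  show "\<forall>\<^sub>F z in F. G (tf z * bf z) / G (tf z) \<le> bf z"
    using tf bnn order_tendstoD(2)[OF bf zero_less_one]
  proof eventually_elim
    case (elim z)
    have "G (bf z * tf z) \<le> bf z * G (tf z)"
      using orlicz_scale_le[OF G] elim by simp
    then show ?case using pos[of "tf z"] elim by (simp add: divide_le_eq mult.commute)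
  qed
qed

text \<open>Sandwiching \<open>F (t b\<^sub>t)\<close> between \<open>F (a t)\<close> and \<open>F (a' t)\<close> for fixed \<open>a < b < a'\<close>
  upgrades the pointwise limit in the definition of regular variation to moving arguments
  \<open>b\<^sub>t \<rightarrow> b > 0\<close>.\<close>
lemma RV0_mono_ratio_tendsto:
  assumes RV: "RV0 q F" and mono: "mono_on {0..} F"
    and tf: "filterlim tf (at_right 0) Fl"
    and bf: "(bf \<longlongrightarrow> b) Fl" and b: "0 < b"
  shows "((\<lambda>z. F (tf z * bf z) / F (tf z)) \<longlongrightarrow> b powr q) Fl"
proof -
  have pos: "0 < F t" if "0 < t" for t using RV that unfolding RV0_def by auto
  have lim: "((\<lambda>z. F (a * tf z) / F (tf z)) \<longlongrightarrow> a powr q) Fl" if "0 < a" for a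
    using RV that unfolding RV0_def by (auto intro: filterlim_compose[OF _ tf])
  have tpos: "\<forall>\<^sub>F z in Fl. 0 < tf z"
    using tf by (auto simp: filterlim_at elim: eventually_mono)
  have cont: "((\<lambda>a. a powr q) \<longlongrightarrow> b powr q) (at b within S)" for S
    using b by (intro tendsto_intros) auto
  show ?thesis
  proof (rule order_tendstoI)
    fix y assume y: "y < b powr q"
    obtain b' where b': "b' < b" "\<And>a. b' < a \<Longrightarrow> a < b \<Longrightarrow> y < a powr q"
      using order_tendstoD(1)[OF cont[of "{..<b}"] y] unfolding eventually_at_left_field by auto
    define a where "a = (max b' (b / 2) + b) / 2"
    have a: "0 < a" "a < b" "y < a powr q"
      using b' b unfolding a_def by (auto intro!: b'(2))
    show "\<forall>\<^sub>F z in Fl. y < F (tf z * bf z) / F (tf z)"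
      using order_tendstoD(1)[OF bf a(2)] order_tendstoD(1)[OF lim[OF a(1)] a(3)] tpos
    proof eventually_elim
      case (elim z)
      have "F (a * tf z) \<le> F (tf z * bf z)"
        using elim a by (intro mono_onD[OF mono]) (auto simp: mult.commute)
      then show ?case using elim pos[of "tf z"] by (smt (verit) divide_right_mono)
    qed
  next
    fix y assume y: "b powr q < y"
    obtain b' where b': "b < b'" "\<And>a. b < a \<Longrightarrow> a < b' \<Longrightarrow> a powr q < y"
      using order_tendstoD(2)[OF cont[of "{b<..}"] y] unfolding eventually_at_right_field by auto
    define a where "a = (b' + b) / 2"
    have a: "0 < a" "b < a" "a powr q < y"
      using b' b unfolding a_def by (auto intro!: b'(2))
    show "\<forall>\<^sub>F z in Fl. F (tf z * bf z) / F (tf z) < y"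
      using order_tendstoD(2)[OF bf a(2)] order_tendstoD(2)[OF lim[OF a(1)] a(3)]
        order_tendstoD(1)[OF bf b] tpos
    proof eventually_elim
      case (elim z)
      have "F (tf z * bf z) \<le> F (a * tf z)"
        using elim a by (intro mono_onD[OF mono]) (auto simp: mult.commute)
      then show ?case using elim pos[of "tf z"] by (smt (verit) divide_right_mono)
    qed
  qed
qed

lemma hyp_H_orlicz: "hyp_H G p \<Longrightarrow> orlicz G"
  and hyp_H_RV0: "hyp_H G p \<Longrightarrow> RV0 p G"
  unfolding hyp_H_def by auto

lemma hyp_H_pos: "hyp_H G p \<Longrightarrow> 0 < t \<Longrightarrow> 0 < G t"
  unfolding hyp_H_def RV0_def by auto

text \<open>\<open>G t / t \<rightarrow> 0\<close> is incompatible with \<open>G t \<ge> c t\<^sup>p\<close> unless \<open>p > 1\<close>.\<close>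
lemma hyp_H_index_gt_1:
  assumes H: "hyp_H G p" shows "1 < p"
proof (rule ccontr)
  assume p: "\<not> 1 < p"
  obtain c where c: "0 < c" "\<And>t. 0 < t \<Longrightarrow> c \<le> G t / t powr p"
    using H unfolding hyp_H_def by auto
  have "((\<lambda>t. G t / t) \<longlongrightarrow> 0) (at_right 0)"
    using hyp_H_orlicz[OF H] unfolding orlicz_def by auto
  then have "\<forall>\<^sub>F t in at_right 0. G t / t < c"
    using c(1) by (rule order_tendstoD(2))
  moreover have "\<forall>\<^sub>F t in at_right (0::real). 0 < t \<and> t < 1"
    by (auto simp: eventually_at_right_field intro!: exI[of _ 1])
  ultimately have "\<forall>\<^sub>F t in at_right (0::real). False"
  proof eventually_elim
    case (elim t)
    have "t \<le> t powr p" using powr_mono'[of p 1 t] p elim by auto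
    then have "G t / t powr p \<le> G t / t"
      using hyp_H_pos[OF H, of t] elim by (intro divide_left_mono) auto
    then show False using c(2)[of t] elim by auto
  qed
  then show False by simp
qed

lemma hyp_H_ratio_tendsto:
  assumes H: "hyp_H G p" and tf: "filterlim tf (at_right 0) F"
    and bf: "(bf \<longlongrightarrow> b) F" and bnn: "\<forall>\<^sub>F z in F. 0 \<le> bf z" and b: "0 \<le> b"
  shows "((\<lambda>z. G (tf z * bf z) / G (tf z)) \<longlongrightarrow> b powr p) F"
proof (cases "b = 0")
  case True
  have "\<forall>\<^sub>F z in F. 0 < tf z"
    using tf by (auto simp: filterlim_at elim: eventually_mono)
  then show ?thesis
    using orlicz_ratio_tendsto_0[OF hyp_H_orlicz[OF H] hyp_H_pos[OF H]] bf bnn True by simp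
next
  case False
  have "mono_on {0..} G" using hyp_H_orlicz[OF H] unfolding orlicz_def by auto
  then show ?thesis
    using RV0_mono_ratio_tendsto[OF hyp_H_RV0[OF H] _ tf bf] b False by simp
qed

section \<open>Differentiability\<close>

lemma C2c_obtains_continuous_derivative:
  assumes "C2c u"
  obtains D where "\<And>x. (u has_derivative blinfun_apply (D x)) (at x)" "continuous_on UNIV D"
proof -
  obtain D D2 where D: "\<forall>x. (u has_derivative blinfun_apply (D x)) (at x)"
    and D2: "\<forall>x. (D has_derivative blinfun_apply (D2 x)) (at x)"
    using assms unfolding C2c_def by blast
  have "continuous_on UNIV D"
    using D2 by (intro continuous_at_imp_continuous_on ballI has_derivative_continuous) auto
  then show ?thesis using that D by blast
qed

lemma C2c_imp_continuous_on: "C2c u \<Longrightarrow> continuous_on UNIV u"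
  by (rule C2c_obtains_continuous_derivative)
    (auto intro!: continuous_at_imp_continuous_on has_derivative_continuous)

lemma linear_eq_inner_Basis_sum:
  fixes f :: "'a::euclidean_space \<Rightarrow> real"
  assumes "linear f"
  shows "f h = (\<Sum>b\<in>Basis. f b *\<^sub>R b) \<bullet> h"
proof -
  have "f h = f (\<Sum>b\<in>Basis. (h \<bullet> b) *\<^sub>R b)" by (simp add: euclidean_representation)
  also have "\<dots> = (\<Sum>b\<in>Basis. (h \<bullet> b) * f b)"
    using assms by (simp add: linear_sum linear_scale)
  also have "\<dots> = (\<Sum>b\<in>Basis. f b *\<^sub>R b) \<bullet> h"
    unfolding inner_sum_left by (intro sum.cong) (auto simp: inner_commute)
  finally show ?thesis .
qed

lemma has_derivative_eq_inner_grad: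
  assumes "(u has_derivative blinfun_apply D) (at x)"
  shows "blinfun_apply D h = grad u x \<bullet> h"
proof -
  have "linear (blinfun_apply D)"
    by (simp add: blinfun.bounded_linear_right bounded_linear.linear)
  then show ?thesis
    unfolding grad_def frechet_derivative_at[OF assms, symmetric]
    by (rule linear_eq_inner_Basis_sum)
qed

lemma continuous_derivative_lipschitz_on_cball:
  fixes u :: "'a::euclidean_space \<Rightarrow> real"
  assumes D: "\<And>x. (u has_derivative blinfun_apply (D x)) (at x)" and cD: "continuous_on UNIV D"
  obtains L where "0 \<le> L" "\<And>y. y \<in> cball x r \<Longrightarrow> \<bar>u y - u x\<bar> \<le> L * norm (y - x)"
proof -
  have "compact (D ` cball x r)"
    by (intro compact_continuous_image continuous_on_subset[OF cD]) auto
  then obtain B where B: "\<And>z. z \<in> cball x r \<Longrightarrow> norm (D z) \<le> B"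
    using compact_imp_bounded[of "D ` cball x r"] unfolding bounded_iff
    by (auto simp del: mem_cball)
  have "\<bar>u y - u x\<bar> \<le> max 0 B * norm (y - x)" if "y \<in> cball x r" for y
  proof -
    have "norm (u y - u x) \<le> B * norm (y - x)"
    proof (rule differentiable_bound[of "cball x r" u "\<lambda>z. blinfun_apply (D z)"])
      show "(u has_derivative blinfun_apply (D z)) (at z within cball x r)" for z
        using D has_derivative_at_withinI by blast
      show "onorm (blinfun_apply (D z)) \<le> B" if "z \<in> cball x r" for z
        using B[OF that] by (simp add: norm_blinfun.rep_eq)
    qed (use that in \<open>auto intro: order_trans[OF zero_le_dist]\<close>)
    also have "\<dots> \<le> max 0 B * norm (y - x)"
      by (intro mult_right_mono) auto
    finally show ?thesis by simp
  qed
  then show thesis using that[of "max 0 B"] by simp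
qed

lemma has_derivative_difference_quotient_tendsto:
  fixes u :: "'a::euclidean_space \<Rightarrow> real"
  assumes "(u has_derivative blinfun_apply D) (at x)"
  shows "((\<lambda>d. (u (x + d *\<^sub>R k) - u x) / d) \<longlongrightarrow> blinfun_apply D k) (at_right 0)"
proof -
  have "((\<lambda>d::real. x + d *\<^sub>R k) has_derivative (\<lambda>d. d *\<^sub>R k)) (at 0)"
    by (auto intro!: derivative_eq_intros)
  moreover have "(u has_derivative blinfun_apply D) (at (x + 0 *\<^sub>R k))"
    using assms by simp
  ultimately have "((\<lambda>d. u (x + d *\<^sub>R k)) has_derivative (\<lambda>d. blinfun_apply D (d *\<^sub>R k))) (at 0)"
    by (metis (no_types) has_derivative_compose)
  then have "((\<lambda>d. u (x + d *\<^sub>R k)) has_real_derivative blinfun_apply D k) (at 0)"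
    by (simp add: has_field_derivative_def blinfun.scaleR_right
        mult.commute[of _ "blinfun_apply D k"])
  then have "((\<lambda>d. (u (x + d *\<^sub>R k) - u x) / d) \<longlongrightarrow> blinfun_apply D k) (at 0)"
    unfolding has_field_derivative_iff by simp
  then show ?thesis by (rule tendsto_mono[OF at_le, rotated]) simp
qed

section \<open>Polar coordinates\<close>

text \<open>\<open>cone_nn_integral \<psi>\<close> is the integral of \<open>\<psi>\<close> against \<^const>\<open>sphere_measure\<close> divided by
  the dimension.\<close>
definition cone_nn_integral :: "('a::euclidean_space \<Rightarrow> ennreal) \<Rightarrow> ennreal" where
  "cone_nn_integral \<psi> = (\<integral>\<^sup>+k. indicator (ball 0 1 - {0}) k * \<psi> (sgn k) \<partial>lborel)"

lemma borel_measurable_cone_integrand: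
  fixes \<psi> :: "'a::euclidean_space \<Rightarrow> ennreal"
  assumes [measurable]: "\<psi> \<in> borel_measurable borel" "S \<in> sets borel"
  shows "(\<lambda>k. indicator S k * \<psi> (sgn k)) \<in> borel_measurable borel"
  by measurable

lemma integral_sphere_measure_eq_cone_nn_integral:
  fixes f :: "'a::euclidean_space \<Rightarrow> real"
  assumes [measurable]: "f \<in> borel_measurable borel" and nonneg: "\<And>w. 0 \<le> f w"
  shows "integral\<^sup>L sphere_measure f
    = real DIM('a) * enn2real (cone_nn_integral (\<lambda>w. ennreal (f w)))"
proof -
  define T where "T = (\<lambda>x::'a. x /\<^sub>R norm x)"
  define Bo where "Bo = ball 0 1 - {0::'a}"
  define Sph where "Sph = restrict_space borel (sphere (0::'a) 1)"
  have Tm: "T \<in> measurable (restrict_space lborel Bo) Sph"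
    unfolding Sph_def
  proof (rule measurable_restrict_space2)
    show "T \<in> space (restrict_space lborel Bo) \<rightarrow> sphere 0 1"
      unfolding T_def Bo_def by (auto simp: space_restrict_space)
    have "T \<in> borel_measurable borel" unfolding T_def by measurable
    then show "T \<in> restrict_space lborel Bo \<rightarrow>\<^sub>M borel"
      by (intro measurable_restrict_space1) simp
  qed
  have fm: "f \<in> borel_measurable Sph"
    unfolding Sph_def by (intro measurable_restrict_space1) measurable
  have "integral\<^sup>L sphere_measure f = enn2real (\<integral>\<^sup>+w. ennreal (f w) \<partial>sphere_measure)"
    by (rule integral_eq_nn_integral) (use fm nonneg in \<open>auto simp: sphere_measure_def Sph_def\<close>)
  also have "(\<integral>\<^sup>+w. ennreal (f w) \<partial>(sphere_measure::'a measure))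
     = ennreal (real DIM('a)) * (\<integral>\<^sup>+w. ennreal (f w) \<partial>distr (restrict_space lborel Bo) Sph T)"
    unfolding sphere_measure_def T_def[symmetric] Bo_def[symmetric] Sph_def[symmetric]
    by (rule nn_integral_scale_measure) (use fm in simp)
  also have "(\<integral>\<^sup>+w. ennreal (f w) \<partial>distr (restrict_space lborel Bo) Sph T)
     = (\<integral>\<^sup>+x. ennreal (f (T x)) * indicator Bo x \<partial>lborel)"
    by (subst nn_integral_distr[OF Tm])
      (use fm in \<open>simp_all add: nn_integral_restrict_space Bo_def\<close>)
  also have "\<dots> = cone_nn_integral (\<lambda>w. ennreal (f w))"
    unfolding cone_nn_integral_def Bo_def T_def
    by (intro nn_integral_cong) (simp add: sgn_div_norm mult.commute)
  finally show ?thesis by (simp add: enn2real_mult)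
qed

lemma nn_integral_lborel_scaleR:
  fixes f :: "'a::euclidean_space \<Rightarrow> ennreal"
  assumes [measurable]: "f \<in> borel_measurable borel" and r: "0 < r"
  shows "(\<integral>\<^sup>+k. f k \<partial>lborel) = ennreal (r ^ DIM('a)) * (\<integral>\<^sup>+k. f (r *\<^sub>R k) \<partial>lborel)"
proof -
  have "(\<integral>\<^sup>+k. f k \<partial>lborel) =
     (\<integral>\<^sup>+k. f k \<partial>density (distr lborel borel (\<lambda>x. 0 + r *\<^sub>R x)) (\<lambda>_. ennreal (\<bar>r\<bar> ^ DIM('a))))"
    using lborel_affine[of r "0::'a"] r by simp
  also have "\<dots> = (\<integral>\<^sup>+k. ennreal (\<bar>r\<bar> ^ DIM('a)) * f (r *\<^sub>R k) \<partial>lborel)"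
    by (simp add: nn_integral_density nn_integral_distr)
  also have "\<dots> = ennreal (r ^ DIM('a)) * (\<integral>\<^sup>+k. f (r *\<^sub>R k) \<partial>lborel)"
    using r by (simp add: nn_integral_cmult)
  finally show ?thesis .
qed

lemma sphere_in_null_sets_lborel: "sphere (c::'a::euclidean_space) r \<in> null_sets lborel"
  using negligible_sphere[of c r]
  by (auto simp: null_sets_completion_iff negligible_iff_null_sets negligible_convex_frontier)

lemma nn_integral_ball_cone:
  fixes \<psi> :: "'a::euclidean_space \<Rightarrow> ennreal"
  assumes [measurable]: "\<psi> \<in> borel_measurable borel" and r: "0 < r"
  shows "(\<integral>\<^sup>+k. indicator (ball 0 r - {0}) k * \<psi> (sgn k) \<partial>lborel)
    = ennreal (r ^ DIM('a)) * cone_nn_integral \<psi>"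
proof -
  have "(\<integral>\<^sup>+k. indicator (ball 0 r - {0}) k * \<psi> (sgn k) \<partial>lborel) =
    ennreal (r ^ DIM('a)) * (\<integral>\<^sup>+k. indicator (ball 0 r - {0}) (r *\<^sub>R k) * \<psi> (sgn (r *\<^sub>R k)) \<partial>lborel)"
    by (rule nn_integral_lborel_scaleR[OF borel_measurable_cone_integrand r]) auto
  also have "(\<integral>\<^sup>+k. indicator (ball 0 r - {0}) (r *\<^sub>R k) * \<psi> (sgn (r *\<^sub>R k)) \<partial>lborel)
      = cone_nn_integral \<psi>"
    unfolding cone_nn_integral_def
    by (intro nn_integral_cong) (use r in \<open>auto simp: sgn_scaleR split: split_indicator\<close>)
  finally show ?thesis .
qed

lemma nn_integral_cball_cone:
  fixes \<psi> :: "'a::euclidean_space \<Rightarrow> ennreal"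
  assumes [measurable]: "\<psi> \<in> borel_measurable borel" and r: "0 \<le> r"
  shows "(\<integral>\<^sup>+k. indicator (cball 0 r - {0}) k * \<psi> (sgn k) \<partial>lborel)
    = ennreal (r ^ DIM('a)) * cone_nn_integral \<psi>"
proof (cases "r = 0")
  case False
  have "AE k in lborel. k \<notin> sphere (0::'a) r"
    using sphere_in_null_sets_lborel by (rule AE_not_in)
  then have "(\<integral>\<^sup>+k. indicator (cball 0 r - {0}) k * \<psi> (sgn k) \<partial>lborel)
      = (\<integral>\<^sup>+k. indicator (ball 0 r - {0}) k * \<psi> (sgn k) \<partial>lborel)"
    by (intro nn_integral_cong_AE) (auto elim!: eventually_mono split: split_indicator)
  then show ?thesis using nn_integral_ball_cone[OF assms(1)] r False by simp
qed (simp add: Diff_eq_empty_iff)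

lemma nn_integral_polar_weight_Icc:
  assumes "0 \<le> a" "a \<le> R"
  shows "(\<integral>\<^sup>+r. ennreal (real DIM('a::euclidean_space) * r ^ (DIM('a) - 1)) * indicator {a..R} r
      \<partial>lborel) = ennreal (R ^ DIM('a) - a ^ DIM('a))"
proof (rule nn_integral_FTC_Icc[where F="\<lambda>r. r ^ DIM('a)"])
  fix r :: real assume "r \<in> {a..R}"
  show "((\<lambda>r. r ^ DIM('a)) has_real_derivative real DIM('a) * r ^ (DIM('a) - 1)) (at r)"
    by (rule derivative_eq_intros refl)+ simp
  show "0 \<le> real DIM('a) * r ^ (DIM('a) - 1)" using \<open>r \<in> {a..R}\<close> assms by auto
qed (use assms in auto)

lemma nn_integral_cone_annulus:
  fixes \<psi> :: "'a::euclidean_space \<Rightarrow> ennreal"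
  assumes [measurable]: "\<psi> \<in> borel_measurable borel"
    and fin: "cone_nn_integral \<psi> < \<infinity>" and a: "0 \<le> a" "a < R"
  shows "(\<integral>\<^sup>+k. indicator (ball 0 R - {0}) k * \<psi> (sgn k) * indicator {k. a < norm k} k \<partial>lborel)
    = cone_nn_integral \<psi> * ennreal (R ^ DIM('a) - a ^ DIM('a))"
proof -
  define \<mu> where "\<mu> = density lborel (\<lambda>k::'a. indicator (ball 0 R - {0}) k * \<psi> (sgn k))"
  define X where "X = ball 0 R - {0::'a}"
  define Y where "Y = cball 0 a - {0::'a}"
  obtain c where c: "cone_nn_integral \<psi> = ennreal c" "0 \<le> c"
    using fin by (cases "cone_nn_integral \<psi>") auto
  have [measurable]: "X \<in> sets borel" "Y \<in> sets borel" unfolding X_def Y_def by auto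
  have YX: "Y \<subseteq> X" using a unfolding X_def Y_def by auto
  have [measurable]: "(\<lambda>k. indicator X k * \<psi> (sgn k)) \<in> borel_measurable borel"
    by (rule borel_measurable_cone_integrand) auto
  have \<mu>: "emeasure \<mu> S = (\<integral>\<^sup>+k. indicator S k * \<psi> (sgn k) \<partial>lborel)"
    if "S \<in> sets borel" "S \<subseteq> X" for S
    unfolding \<mu>_def X_def[symmetric] using that
    by (subst emeasure_density) (auto intro!: nn_integral_cong split: split_indicator)
  have \<mu>X: "emeasure \<mu> X = ennreal (R ^ DIM('a) * c)"
    using \<mu>[of X] nn_integral_ball_cone[OF assms(1), of R] a c unfolding X_def
    by (simp add: ennreal_mult)
  have \<mu>Y: "emeasure \<mu> Y = ennreal (a ^ DIM('a) * c)"
    using \<mu>[of Y] YX nn_integral_cball_cone[OF assms(1) a(1)] a c unfolding Y_def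
    by (simp add: ennreal_mult)
  have "(\<integral>\<^sup>+k. indicator (ball 0 R - {0}) k * \<psi> (sgn k) * indicator {k. a < norm k} k \<partial>lborel)
      = emeasure \<mu> (X - Y)"
  proof -
    have "indicator X k * \<psi> (sgn k) * indicator {k. a < norm k} k
        = indicator X k * \<psi> (sgn k) * indicator (X - Y) k" for k :: 'a
      using a by (auto simp: X_def Y_def split: split_indicator)
    then show ?thesis
      unfolding \<mu>_def X_def[symmetric] by (simp add: emeasure_density mult.commute)
  qed
  also have "\<dots> = emeasure \<mu> X - emeasure \<mu> Y"
    using YX \<mu>Y by (intro emeasure_Diff) (auto simp: \<mu>_def)
  also have "\<dots> = cone_nn_integral \<psi> * ennreal (R ^ DIM('a) - a ^ DIM('a))"
    using a c unfolding \<mu>X \<mu>Y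
    by (simp add: ennreal_minus ennreal_mult[symmetric] power_mono algebra_simps)
  finally show ?thesis .
qed

lemma distr_norm_cone_density:
  fixes \<psi> :: "'a::euclidean_space \<Rightarrow> ennreal"
  assumes [measurable]: "\<psi> \<in> borel_measurable borel"
    and fin: "cone_nn_integral \<psi> < \<infinity>" and R: "0 < R"
  shows "distr (density lborel (\<lambda>k. indicator (ball 0 R - {0}) k * \<psi> (sgn k))) borel norm
    = density lborel (\<lambda>r. cone_nn_integral \<psi> *
        (ennreal (real DIM('a) * r ^ (DIM('a) - 1)) * indicator {0..R} r))"
    (is "distr ?\<mu> borel norm = ?\<nu>")
proof -
  have [measurable]: "(\<lambda>k::'a. indicator (ball 0 R - {0}) k * \<psi> (sgn k)) \<in> borel_measurable borel"
    by (rule borel_measurable_cone_integrand) auto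
  have "emeasure (distr ?\<mu> borel norm) {a<..} = emeasure ?\<nu> {a<..} \<and> emeasure ?\<nu> {a<..} < \<infinity>"
    for a
  proof -
    define a' where "a' = max a 0"
    have "emeasure (distr ?\<mu> borel norm) {a<..} = emeasure ?\<mu> {k. a < norm k}"
      by (subst emeasure_distr) (auto intro!: arg_cong[where f="emeasure _"])
    also have "\<dots>
      = (\<integral>\<^sup>+k. indicator (ball 0 R - {0}) k * \<psi> (sgn k) * indicator {k. a' < norm k} k \<partial>lborel)"
      by (subst emeasure_density)
        (auto intro!: nn_integral_cong simp: a'_def split: split_indicator)
    finally have \<mu>: "emeasure (distr ?\<mu> borel norm) {a<..}
      = (\<integral>\<^sup>+k. indicator (ball 0 R - {0}) k * \<psi> (sgn k) * indicator {k. a' < norm k} k \<partial>lborel)" .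
    have \<nu>: "emeasure ?\<nu> {a<..}
      = (\<integral>\<^sup>+r. cone_nn_integral \<psi> *
          (ennreal (real DIM('a) * r ^ (DIM('a) - 1)) * indicator {a'..R} r) \<partial>lborel)"
      by (simp add: emeasure_density, intro nn_integral_cong_AE)
         (use AE_lborel_singleton[of a'] in \<open>auto simp: a'_def split: split_indicator\<close>)
    show ?thesis
    proof (cases "a' < R")
      case True
      have "0 \<le> a'" by (simp add: a'_def)
      then show ?thesis
        unfolding \<mu> \<nu> nn_integral_cone_annulus[OF assms(1) fin \<open>0 \<le> a'\<close> True]
        using fin nn_integral_polar_weight_Icc[of a' R, where 'a='a] True
        by (simp add: nn_integral_cmult ennreal_mult_less_top)
    next
      case False
      have "(\<integral>\<^sup>+k. indicator (ball 0 R - {0}) k * \<psi> (sgn k) * indicator {k. a' < norm k} k \<partial>lborel)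
          = (\<integral>\<^sup>+(k::'a). 0 \<partial>lborel)"
        using False by (intro nn_integral_cong) (auto split: split_indicator)
      moreover have "(\<integral>\<^sup>+r. cone_nn_integral \<psi> *
          (ennreal (real DIM('a) * r ^ (DIM('a) - 1)) * indicator {a'..R} r) \<partial>lborel)
          = (\<integral>\<^sup>+(r::real). 0 \<partial>lborel)"
        by (intro nn_integral_cong_AE AE_mp[OF AE_lborel_singleton[of R] AE_I2])
          (use False in \<open>auto split: split_indicator\<close>)
      ultimately show ?thesis unfolding \<mu> \<nu> by simp
    qed
  qed
  then show ?thesis by (intro measure_eqI_lessThan) auto
qed

lemma nn_integral_polar_ball:
  fixes \<psi> :: "'a::euclidean_space \<Rightarrow> ennreal" and \<phi> :: "real \<Rightarrow> ennreal"
  assumes [measurable]: "\<psi> \<in> borel_measurable borel" "\<phi> \<in> borel_measurable borel"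
    and fin: "cone_nn_integral \<psi> < \<infinity>" and R: "0 < R"
  shows "(\<integral>\<^sup>+k. indicator (ball 0 R - {0}) k * \<psi> (sgn k) * \<phi> (norm k) \<partial>lborel)
    = cone_nn_integral \<psi> *
      (\<integral>\<^sup>+r. ennreal (real DIM('a) * r ^ (DIM('a) - 1)) * indicator {0..R} r * \<phi> r \<partial>lborel)"
proof -
  have [measurable]: "(\<lambda>k::'a. indicator (ball 0 R - {0}) k * \<psi> (sgn k)) \<in> borel_measurable borel"
    by (rule borel_measurable_cone_integrand) auto
  have "(\<integral>\<^sup>+k. indicator (ball 0 R - {0}) k * \<psi> (sgn k) * \<phi> (norm k) \<partial>lborel)
      = (\<integral>\<^sup>+r. \<phi> r
          \<partial>distr (density lborel (\<lambda>k. indicator (ball 0 R - {0}) k * \<psi> (sgn k))) borel norm)"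
    by (simp add: nn_integral_distr nn_integral_density)
  also have "\<dots> = cone_nn_integral \<psi> *
      (\<integral>\<^sup>+r. ennreal (real DIM('a) * r ^ (DIM('a) - 1)) * indicator {0..R} r * \<phi> r \<partial>lborel)"
    unfolding distr_norm_cone_density[OF assms(1) fin R]
    by (simp add: nn_integral_density nn_integral_cmult mult.assoc)
  finally show ?thesis .
qed

lemma nn_integral_indicator_incseq_tendsto:
  assumes [measurable]: "f \<in> borel_measurable M" "\<And>n. A n \<in> sets M"
    and "incseq A" "(\<Union>n. A n) = space M"
  shows "(\<lambda>n. \<integral>\<^sup>+x. f x * indicator (A n) x \<partial>M) \<longlonglongrightarrow> (\<integral>\<^sup>+x. f x \<partial>M)"
proof -
  have "(\<lambda>n. emeasure (density M f) (A n)) \<longlonglongrightarrow> emeasure (density M f) (\<Union>n. A n)"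
    using assms by (intro Lim_emeasure_incseq) auto
  then show ?thesis
    using assms(4) by (simp add: emeasure_density)
qed

lemma nn_integral_polar:
  fixes \<psi> :: "'a::euclidean_space \<Rightarrow> ennreal" and \<phi> :: "real \<Rightarrow> ennreal"
  assumes [measurable]: "\<psi> \<in> borel_measurable borel" "\<phi> \<in> borel_measurable borel"
    and fin: "cone_nn_integral \<psi> < \<infinity>"
  shows "(\<integral>\<^sup>+k. indicator (UNIV - {0}) k * \<psi> (sgn k) * \<phi> (norm k) \<partial>lborel)
    = cone_nn_integral \<psi> *
      (\<integral>\<^sup>+r. ennreal (real DIM('a) * r ^ (DIM('a) - 1)) * indicator {0..} r * \<phi> r \<partial>lborel)"
    (is "integral\<^sup>N lborel ?f = cone_nn_integral \<psi> * integral\<^sup>N lborel ?g")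
proof -
  define R where "R n = real (Suc n)" for n
  have [measurable]: "?f \<in> borel_measurable borel"
    using borel_measurable_cone_integrand[OF assms(1), of "UNIV - {0}"] by measurable
  have arch: "\<exists>n. t < R n" for t
  proof -
    obtain n where "t < real n" using reals_Archimedean2 by blast
    then show ?thesis by (intro exI[of _ n]) (simp add: R_def)
  qed
  have lim_f: "(\<lambda>n. \<integral>\<^sup>+k. ?f k * indicator (ball 0 (R n)) k \<partial>lborel) \<longlonglongrightarrow> integral\<^sup>N lborel ?f"
  proof (rule nn_integral_indicator_incseq_tendsto)
    show "incseq (\<lambda>n. ball (0::'a) (R n))"
      by (auto simp: incseq_def R_def intro!: subset_ball)
    have "k \<in> (\<Union>n. ball 0 (R n))" for k :: 'a
      using arch[of "norm k"] by auto
    then show "(\<Union>n. ball (0::'a) (R n)) = space lborel" by auto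
  qed measurable
  have "(\<lambda>n. \<integral>\<^sup>+r. ?g r * indicator {..R n} r \<partial>lborel) \<longlonglongrightarrow> integral\<^sup>N lborel ?g"
  proof (rule nn_integral_indicator_incseq_tendsto)
    show "incseq (\<lambda>n. {..R n})"
      by (auto simp: incseq_def R_def)
    have "r \<in> (\<Union>n. {..R n})" for r
      using arch[of r] by (auto intro: less_imp_le)
    then show "(\<Union>n. {..R n}) = space lborel" by auto
  qed measurable
  then have lim_g: "(\<lambda>n. cone_nn_integral \<psi> * (\<integral>\<^sup>+r. ?g r * indicator {..R n} r \<partial>lborel))
      \<longlonglongrightarrow> cone_nn_integral \<psi> * integral\<^sup>N lborel ?g"
    using fin by (simp add: ennreal_tendsto_cmult)
  have eq: "(\<integral>\<^sup>+k. ?f k * indicator (ball 0 (R n)) k \<partial>lborel)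
      = cone_nn_integral \<psi> * (\<integral>\<^sup>+r. ?g r * indicator {..R n} r \<partial>lborel)" for n
  proof -
    have "(\<integral>\<^sup>+k. ?f k * indicator (ball 0 (R n)) k \<partial>lborel)
        = (\<integral>\<^sup>+k. indicator (ball 0 (R n) - {0}) k * \<psi> (sgn k) * \<phi> (norm k) \<partial>lborel)"
      by (intro nn_integral_cong) (auto split: split_indicator)
    moreover have "(\<integral>\<^sup>+r. ?g r * indicator {..R n} r \<partial>lborel)
        = (\<integral>\<^sup>+r. ennreal (real DIM('a) * r ^ (DIM('a) - 1)) * indicator {0..R n} r * \<phi> r \<partial>lborel)"
      by (intro nn_integral_cong) (auto split: split_indicator)
    ultimately show ?thesis
      using nn_integral_polar_ball[OF assms(1,2) fin, of "R n"] by (simp add: R_def)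
  qed
  show ?thesis
    using lim_f lim_g unfolding eq by (rule LIMSEQ_unique)
qed

lemma cone_nn_integral_finite:
  fixes \<psi> :: "'a::euclidean_space \<Rightarrow> ennreal"
  assumes "\<And>w. norm w = 1 \<Longrightarrow> \<psi> w \<le> 1"
  shows "cone_nn_integral \<psi> < \<infinity>"
proof -
  have "cone_nn_integral \<psi> \<le> (\<integral>\<^sup>+k. indicator (ball (0::'a) 1) k \<partial>lborel)"
    unfolding cone_nn_integral_def
    by (intro nn_integral_mono) (auto simp: assms norm_sgn split: split_indicator)
  also have "\<dots> < \<infinity>" using emeasure_lborel_ball_finite by simp
  finally show ?thesis .
qed

lemma nn_integral_polar_weight_powr:
  assumes q: "0 < q" and c: "0 \<le> c"
  shows "(\<integral>\<^sup>+r. ennreal (real DIM('a::euclidean_space) * r ^ (DIM('a) - 1)) * indicator {0..1} r *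
            ennreal (c * r powr q / r ^ DIM('a)) \<partial>lborel) = ennreal (real DIM('a) * c / q)"
proof -
  have "ennreal (real DIM('a) * r ^ (DIM('a) - 1)) * indicator {0..1} r
        * ennreal (c * r powr q / r ^ DIM('a))
      = ennreal (real DIM('a) * c) * ennreal (indicator {0..1} r * r powr (q - 1))" if "r \<noteq> 0" for r
  proof (cases "r \<in> {0..1}")
    case True
    then have "0 < r" using that by auto
    then have "real DIM('a) * r ^ (DIM('a) - 1) * (c * r powr q / r ^ DIM('a))
        = real DIM('a) * c * r powr (q - 1)"
      by (simp add: power_diff powr_diff)
    then show ?thesis using True c \<open>0 < r\<close> by (simp add: ennreal_mult[symmetric] mult.assoc)
  qed simp
  then have "(\<integral>\<^sup>+r. ennreal (real DIM('a) * r ^ (DIM('a) - 1)) * indicator {0..1} r *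
      ennreal (c * r powr q / r ^ DIM('a)) \<partial>lborel)
    = ennreal (real DIM('a) * c) * (\<integral>\<^sup>+r. ennreal (indicator {0..1} r * r powr (q - 1)) \<partial>lborel)"
    by (subst nn_integral_cmult[symmetric], measurable)
      (intro nn_integral_cong_AE AE_mp[OF AE_lborel_singleton[of 0] AE_I2], simp)
  also have "(\<integral>\<^sup>+r. ennreal (indicator {0..1} r * r powr (q - 1)) \<partial>lborel) = ennreal (1 / q)"
    using nn_integral_has_integral_lebesgue[OF _ has_integral_powr_from_0[of "q - 1" 1]] q by simp
  finally show ?thesis using q c by (simp add: ennreal_mult[symmetric])
qed

lemma integrable_ball_norm_powr_singular:
  assumes q: "0 < q" and M: "0 \<le> M"
  shows "integrable lborel
    (\<lambda>k::'a::euclidean_space. indicator (ball 0 1) k * (M * norm k powr q) / norm k ^ DIM('a))"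
    (is "integrable lborel ?f")
proof (rule integrableI_nonneg)
  have [measurable]: "ball (0::'a) 1 \<in> sets borel" by simp
  have one_fin: "cone_nn_integral (\<lambda>w::'a. 1) < \<infinity>"
    by (rule cone_nn_integral_finite) simp
  show "?f \<in> borel_measurable lborel" by measurable
  show "AE k in lborel. 0 \<le> ?f k"
    using M by (auto split: split_indicator)
  have "(\<integral>\<^sup>+k. ennreal (?f k) \<partial>lborel)
      = (\<integral>\<^sup>+k. indicator (ball 0 1 - {0}) k * (\<lambda>w::'a. 1) (sgn k)
          * ennreal (M * norm k powr q / norm k ^ DIM('a)) \<partial>lborel)"
    by (intro nn_integral_cong) (auto split: split_indicator)
  also have "\<dots> = cone_nn_integral (\<lambda>w::'a. 1) * ennreal (real DIM('a) * M / q)"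
    using nn_integral_polar_weight_powr[of q M, where 'a='a] q M one_fin
    by (subst nn_integral_polar_ball) auto
  also have "\<dots> < \<infinity>"
    using one_fin by (simp add: ennreal_mult_less_top)
  finally show "(\<integral>\<^sup>+k. ennreal (?f k) \<partial>lborel) < \<infinity>" .
qed

section \<open>Rotation invariance via the Gaussian measure\<close>

definition gauss_density :: "'a::euclidean_space \<Rightarrow> real" where
  "gauss_density k = (\<Prod>b\<in>Basis. std_normal_density (k \<bullet> b))"

definition gauss_measure :: "'a::euclidean_space measure" where
  "gauss_measure = density lborel (\<lambda>k. ennreal (gauss_density k))"

lemma sets_gauss_measure [simp, measurable_cong]: "sets gauss_measure = sets borel"
  and space_gauss_measure [simp]: "space gauss_measure = UNIV"
  by (simp_all add: gauss_measure_def)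

lemma borel_measurable_gauss_density[measurable]: "gauss_density \<in> borel_measurable borel"
  unfolding gauss_density_def by measurable

lemma gauss_density_nonneg: "gauss_density k \<ge> 0"
  unfolding gauss_density_def by (intro prod_nonneg) (auto simp: normal_density_nonneg)

lemma emeasure_gauss_measure_product:
  fixes A :: "'a::euclidean_space \<Rightarrow> real set"
  assumes A: "\<And>b. b \<in> Basis \<Longrightarrow> A b \<in> sets borel"
  shows "emeasure gauss_measure {k. \<forall>b\<in>Basis. k \<bullet> b \<in> A b}
    = (\<Prod>b\<in>Basis. emeasure (density lborel (\<lambda>x. ennreal (std_normal_density x))) (A b))"
proof -
  have [measurable]: "Measurable.pred borel (\<lambda>k::'a. k \<bullet> b \<in> A b)" if "b \<in> Basis" for b
    using A[OF that] by measurable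
  have ms: "{k::'a. \<forall>b\<in>Basis. k \<bullet> b \<in> A b} \<in> sets borel"
    by measurable
  have "emeasure gauss_measure {k. \<forall>b\<in>Basis. k \<bullet> b \<in> A b}
     = (\<integral>\<^sup>+k. ennreal (gauss_density k) * indicator {k::'a. \<forall>b\<in>Basis. k \<bullet> b \<in> A b} k \<partial>lborel)"
    using ms by (simp add: gauss_measure_def emeasure_density)
  also have "\<dots> = (\<integral>\<^sup>+k. (\<Prod>b\<in>Basis.
      ennreal (std_normal_density (k \<bullet> b)) * indicator (A b) (k \<bullet> b)) \<partial>lborel)"
  proof (intro nn_integral_cong)
    fix k :: 'a
    have "ennreal (gauss_density k) = (\<Prod>b\<in>Basis. ennreal (std_normal_density (k \<bullet> b)))"
      unfolding gauss_density_def by (subst prod_ennreal) (auto simp: normal_density_nonneg)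
    moreover have "indicator {k::'a. \<forall>b\<in>Basis. k \<bullet> b \<in> A b} k
        = (\<Prod>b\<in>Basis. indicator (A b) (k \<bullet> b) :: ennreal)"
      by (auto simp: indicator_def)
    ultimately show "ennreal (gauss_density k) * indicator {k::'a. \<forall>b\<in>Basis. k \<bullet> b \<in> A b} k =
        (\<Prod>b\<in>Basis. ennreal (std_normal_density (k \<bullet> b)) * indicator (A b) (k \<bullet> b))"
      by (simp add: prod.distrib)
  qed
  also have "\<dots> = (\<Prod>b\<in>Basis. (\<integral>\<^sup>+x. ennreal (std_normal_density x) * indicator (A b) x \<partial>lborel))"
    by (rule nn_integral_lborel_prod) (use A in auto)
  also have "\<dots> = (\<Prod>b\<in>Basis. emeasure (density lborel (\<lambda>x. ennreal (std_normal_density x))) (A b))"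
    using A by (intro prod.cong) (auto simp: emeasure_density)
  finally show ?thesis .
qed

lemma prob_space_gauss_measure: "prob_space (gauss_measure :: 'a::euclidean_space measure)"
proof
  have "emeasure gauss_measure {k. \<forall>b\<in>Basis. k \<bullet> b \<in> UNIV} = 1"
    using prob_space.emeasure_space_1[OF prob_space_normal_density[of 1 0]]
    by (subst emeasure_gauss_measure_product) auto
  then show "emeasure gauss_measure (space gauss_measure) = 1"
    by simp
qed

lemma distr_gauss_measure_inner_Basis:
  fixes b :: "'a::euclidean_space"
  assumes b: "b \<in> Basis"
  shows "distr gauss_measure lborel (\<lambda>k. k \<bullet> b)
       = density lborel (\<lambda>x. ennreal (std_normal_density x))"
proof (rule measure_eqI)
  fix S :: "real set" assume S: "S \<in> sets (distr gauss_measure lborel (\<lambda>k. k \<bullet> b))"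
  then have Sb: "S \<in> sets borel" by simp
  have "emeasure (distr gauss_measure lborel (\<lambda>k. k \<bullet> b)) S
      = emeasure gauss_measure {k. \<forall>c\<in>Basis. k \<bullet> c \<in> (if c = b then S else UNIV)}"
    using Sb b by (subst emeasure_distr) (auto intro!: arg_cong[where f="emeasure _"])
  also have "\<dots> = (\<Prod>c\<in>Basis.
      emeasure (density lborel (\<lambda>x. ennreal (std_normal_density x))) (if c = b then S else UNIV))"
    using Sb by (intro emeasure_gauss_measure_product) auto
  also have "\<dots> = emeasure (density lborel (\<lambda>x. ennreal (std_normal_density x))) S"
  proof -
    have u: "emeasure (density lborel (\<lambda>x. ennreal (std_normal_density x))) UNIV = 1"
      using prob_space.emeasure_space_1[OF prob_space_normal_density[of 1 0]] by simp
    show ?thesis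
      using b by (subst prod.remove[of _ b]) (auto simp: u)
  qed
  finally show "emeasure (distr gauss_measure lborel (\<lambda>k. k \<bullet> b)) S
      = emeasure (density lborel (\<lambda>x. ennreal (std_normal_density x))) S" .
qed simp

lemma indep_vars_gauss_measure_Basis:
  "prob_space.indep_vars (gauss_measure :: 'a::euclidean_space measure)
    (\<lambda>_. borel) (\<lambda>b k. k \<bullet> b) Basis"
proof -
  define S where "S = density lborel (\<lambda>x. ennreal (std_normal_density x))"
  interpret prob_space "gauss_measure :: 'a measure" by (rule prob_space_gauss_measure)
  have rv: "(\<lambda>k::'a. k \<bullet> b) \<in> gauss_measure \<rightarrow>\<^sub>M borel" for b
    by (simp add: borel_measurable_continuous_onI continuous_intros)
  have marg: "distr gauss_measure borel (\<lambda>k. k \<bullet> b) = S" if "b \<in> Basis" for b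
    using distr_gauss_measure_inner_Basis[OF that] unfolding S_def distr_def by simp
  interpret S: prob_space S unfolding S_def by (rule prob_space_normal_density) simp
  interpret PS: product_sigma_finite "\<lambda>_::'a. S"
    unfolding product_sigma_finite_def by (auto intro: S.sigma_finite_measure_axioms)
  have "distr (gauss_measure :: 'a measure) (Pi\<^sub>M Basis (\<lambda>_. borel)) (\<lambda>k. \<lambda>b\<in>Basis. k \<bullet> b)
      = Pi\<^sub>M Basis (\<lambda>_. S)" (is "?D = _")
  proof (rule PS.PiM_eqI)
    show "sets ?D = sets (Pi\<^sub>M Basis (\<lambda>_. S))"
      unfolding sets_distr by (rule sets_PiM_cong) (auto simp: S_def)
    fix A :: "'a \<Rightarrow> real set" assume "\<And>i. i \<in> Basis \<Longrightarrow> A i \<in> sets S"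
    then have A: "\<And>i. i \<in> Basis \<Longrightarrow> A i \<in> sets borel" unfolding S_def by simp
    have "emeasure ?D (Pi\<^sub>E Basis A)
        = emeasure gauss_measure ((\<lambda>k. \<lambda>b\<in>Basis. k \<bullet> b) -` Pi\<^sub>E Basis A \<inter> space gauss_measure)"
      using A by (intro emeasure_distr measurable_restrict rv sets_PiM_I_finite) auto
    also have "(\<lambda>k. \<lambda>b\<in>Basis. k \<bullet> b) -` Pi\<^sub>E Basis A \<inter> space gauss_measure
        = {k. \<forall>b\<in>Basis. k \<bullet> b \<in> A b}"
      by auto
    also have "emeasure gauss_measure \<dots> = (\<Prod>b\<in>Basis. emeasure S (A b))"
      unfolding S_def using A by (rule emeasure_gauss_measure_product)
    finally show "emeasure ?D (Pi\<^sub>E Basis A) = (\<Prod>b\<in>Basis. emeasure S (A b))" .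
  qed simp
  also have "Pi\<^sub>M Basis (\<lambda>_. S) = Pi\<^sub>M Basis (\<lambda>b. distr gauss_measure borel (\<lambda>k. k \<bullet> b))"
    using marg by (intro PiM_cong) auto
  finally have "indep_vars (\<lambda>_. borel) (\<lambda>b k. k \<bullet> b) Basis"
    by (subst indep_vars_iff_distr_eq_PiM') (use rv in auto)
  then show ?thesis .
qed

lemma inner_eq_sum_nonzero_Basis:
  fixes e k :: "'a::euclidean_space"
  shows "k \<bullet> e = (\<Sum>b\<in>{b\<in>Basis. e \<bullet> b \<noteq> 0}. (e \<bullet> b) * (k \<bullet> b))"
proof -
  have "k \<bullet> e = (\<Sum>b\<in>Basis. (e \<bullet> b) * (k \<bullet> b))"
    by (subst euclidean_inner) (simp add: mult.commute)
  also have "\<dots> = (\<Sum>b\<in>{b\<in>Basis. e \<bullet> b \<noteq> 0}. (e \<bullet> b) * (k \<bullet> b))"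
    by (rule sum.mono_neutral_right) auto
  finally show ?thesis .
qed

lemma sum_nonzero_Basis_inner_square:
  fixes e :: "'a::euclidean_space"
  shows "(\<Sum>b\<in>{b\<in>Basis. e \<bullet> b \<noteq> 0}. \<bar>e \<bullet> b\<bar>\<^sup>2) = (norm e)\<^sup>2"
proof -
  have "(\<Sum>b\<in>{b\<in>Basis. e \<bullet> b \<noteq> 0}. \<bar>e \<bullet> b\<bar>\<^sup>2) = (\<Sum>b\<in>Basis. (e \<bullet> b)\<^sup>2)"
    by (simp only: power2_abs, rule sum.mono_neutral_left) auto
  also have "\<dots> = (norm e)\<^sup>2"
    using euclidean_inner[of e e] by (simp add: power2_eq_square dot_square_norm)
  finally show ?thesis .
qed

lemma distributed_gauss_measure_scaled_inner_Basis:
  fixes b :: "'a::euclidean_space"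
  assumes "b \<in> Basis" "c \<noteq> 0"
  shows "distributed gauss_measure lborel (\<lambda>k. 0 + c * (k \<bullet> b))
    (\<lambda>x. ennreal (normal_density 0 \<bar>c\<bar> x))"
proof -
  have "distributed gauss_measure lborel (\<lambda>k. k \<bullet> b) (\<lambda>x. ennreal (normal_density 0 1 x))"
    unfolding distributed_def using distr_gauss_measure_inner_Basis[OF assms(1)]
    by (auto simp: borel_measurable_continuous_onI continuous_intros)
  from prob_space.normal_density_affine[OF prob_space_gauss_measure this zero_less_one assms(2),
      of 0]
  show ?thesis by simp
qed

text \<open>\<open>k \<bullet> e\<close> is the sum of the independent centred normal variables \<open>(e \<bullet> b) (k \<bullet> b)\<close>,
  whose variances add up to \<open>|e|\<^sup>2 = 1\<close>.\<close>
lemma distributed_gauss_measure_inner: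
  fixes e :: "'a::euclidean_space"
  assumes e: "norm e = 1"
  shows "distributed gauss_measure lborel (\<lambda>k. k \<bullet> e) (\<lambda>x. ennreal (std_normal_density x))"
proof -
  interpret prob_space "gauss_measure :: 'a measure" by (rule prob_space_gauss_measure)
  define I where "I = {b\<in>Basis. e \<bullet> b \<noteq> 0}"
  have I: "finite I" "I \<subseteq> Basis" unfolding I_def by auto
  have "I \<noteq> {}"
    using e euclidean_all_zero_iff[of e] unfolding I_def by auto
  moreover have "indep_vars (\<lambda>_. borel) (\<lambda>b k. 0 + (e \<bullet> b) * (k \<bullet> b)) I"
    using indep_vars_subset[OF indep_vars_compose2[OF indep_vars_gauss_measure_Basis,
        of "\<lambda>b x. 0 + (e \<bullet> b) * x" "\<lambda>_. borel"] I(2)]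
    by simp
  ultimately have "distributed gauss_measure lborel (\<lambda>k. \<Sum>b\<in>I. 0 + (e \<bullet> b) * (k \<bullet> b))
      (\<lambda>x. ennreal (normal_density (\<Sum>b\<in>I. 0) (sqrt (\<Sum>b\<in>I. \<bar>e \<bullet> b\<bar>\<^sup>2)) x))"
    by (intro sum_indep_normal[OF I(1)] distributed_gauss_measure_scaled_inner_Basis)
      (auto simp: I_def)
  then show ?thesis
    using e inner_eq_sum_nonzero_Basis[of _ e] sum_nonzero_Basis_inner_square[of e]
    unfolding I_def by simp
qed

lemma exp_norm_eq_gauss_density:
  "exp (- (norm k)\<^sup>2 / 2) = sqrt (2 * pi) ^ DIM('a) * gauss_density (k::'a::euclidean_space)"
proof -
  have "gauss_density k = (\<Prod>b\<in>Basis. (1 / sqrt (2 * pi)) * exp (- (k \<bullet> b)\<^sup>2 / 2))"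
    unfolding gauss_density_def by (simp add: std_normal_density_def)
  also have "\<dots> = (1 / sqrt (2 * pi)) ^ DIM('a) * exp (\<Sum>b\<in>Basis. - (k \<bullet> b)\<^sup>2 / 2)"
    by (subst prod.distrib) (simp add: exp_sum)
  also have "(\<Sum>b\<in>Basis. - (k \<bullet> b)\<^sup>2 / 2) = - (norm k)\<^sup>2 / 2"
  proof -
    have "(norm k)\<^sup>2 = k \<bullet> k" by (rule power2_norm_eq_inner)
    also have "\<dots> = (\<Sum>b\<in>Basis. (k \<bullet> b) * (k \<bullet> b))" by (rule euclidean_inner)
    also have "\<dots> = (\<Sum>b\<in>Basis. (k \<bullet> b)\<^sup>2)" by (simp add: power2_eq_square)
    finally have "(norm k)\<^sup>2 = (\<Sum>b\<in>Basis. (k \<bullet> b)\<^sup>2)" .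
    then show ?thesis by (simp add: sum_divide_distrib[symmetric] sum_negf)
  qed
  finally have "gauss_density k = (1 / sqrt (2 * pi)) ^ DIM('a) * exp (- (norm k)\<^sup>2 / 2)" .
  then show ?thesis by (simp add: power_divide)
qed

lemma nn_integral_abs_inner_powr_exp:
  fixes e :: "'a::euclidean_space"
  assumes e: "norm e = 1"
  shows "(\<integral>\<^sup>+k. ennreal (\<bar>k \<bullet> e\<bar> powr p * exp (- (norm k)\<^sup>2 / 2)) \<partial>lborel)
    = ennreal (sqrt (2 * pi) ^ DIM('a))
      * (\<integral>\<^sup>+t. ennreal (std_normal_density t) * ennreal (\<bar>t\<bar> powr p) \<partial>lborel)"
proof -
  have "(\<integral>\<^sup>+k. ennreal (\<bar>k \<bullet> e\<bar> powr p * exp (- (norm k)\<^sup>2 / 2)) \<partial>lborel)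
      = (\<integral>\<^sup>+k. ennreal (sqrt (2 * pi) ^ DIM('a))
          * (ennreal (gauss_density k) * ennreal (\<bar>k \<bullet> e\<bar> powr p)) \<partial>lborel)"
    by (intro nn_integral_cong, subst exp_norm_eq_gauss_density)
      (simp add: gauss_density_nonneg ennreal_mult[symmetric] mult_ac)
  also have "\<dots> = ennreal (sqrt (2 * pi) ^ DIM('a)) * (\<integral>\<^sup>+k. ennreal (\<bar>k \<bullet> e\<bar> powr p) \<partial>gauss_measure)"
    by (simp add: nn_integral_cmult gauss_measure_def nn_integral_density)
  also have "(\<integral>\<^sup>+k. ennreal (\<bar>k \<bullet> e\<bar> powr p) \<partial>gauss_measure)
      = (\<integral>\<^sup>+t. ennreal (std_normal_density t) * ennreal (\<bar>t\<bar> powr p) \<partial>lborel)"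
    by (rule distributed_nn_integral[OF distributed_gauss_measure_inner[OF e], symmetric])
      measurable
  finally show ?thesis .
qed

lemma cone_nn_integral_abs_inner_powr_finite:
  fixes e :: "'a::euclidean_space"
  assumes "0 \<le> p" "norm e = 1"
  shows "cone_nn_integral (\<lambda>w. ennreal (\<bar>w \<bullet> e\<bar> powr p)) < \<infinity>"
proof (rule cone_nn_integral_finite)
  fix w :: 'a assume "norm w = 1"
  then have "\<bar>w \<bullet> e\<bar> \<le> 1" using Cauchy_Schwarz_ineq2[of w e] assms by simp
  then show "ennreal (\<bar>w \<bullet> e\<bar> powr p) \<le> 1" using assms by (simp add: powr_le1)
qed

lemma nn_integral_std_normal_abs_powr_finite:
  assumes "0 \<le> p"
  shows "(\<integral>\<^sup>+t. ennreal (std_normal_density t) * ennreal (\<bar>t\<bar> powr p) \<partial>lborel) < \<infinity>"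
proof -
  define n where "n = nat \<lceil>p\<rceil>"
  have bound: "\<bar>t\<bar> powr p \<le> 1 + \<bar>t\<bar> ^ n" for t :: real
  proof (cases "\<bar>t\<bar> \<le> 1")
    case True
    then have "\<bar>t\<bar> powr p \<le> 1" using assms by (intro powr_le1) auto
    then show ?thesis by (simp add: add_increasing2)
  next
    case False
    then have "\<bar>t\<bar> powr p \<le> \<bar>t\<bar> powr (real n)"
      unfolding n_def by (intro powr_mono) (auto, linarith)
    then show ?thesis using False by (simp add: powr_realpow)
  qed
  have "integrable lborel (\<lambda>t. std_normal_density t * \<bar>t\<bar> powr p)"
  proof (rule Bochner_Integration.integrable_bound)
    show "integrable lborel (\<lambda>t. std_normal_density t + std_normal_density t * \<bar>t\<bar> ^ n)"
      by (intro Bochner_Integration.integrable_add integrable_normal_density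
          integrable_std_normal_moment_abs) simp
    show "AE t in lborel. norm (std_normal_density t * \<bar>t\<bar> powr p)
        \<le> norm (std_normal_density t + std_normal_density t * \<bar>t\<bar> ^ n)"
      using mult_left_mono[OF bound normal_density_nonneg]
      by (auto simp: normal_density_nonneg distrib_left)
  qed measurable
  then show ?thesis
    by (simp add: integrable_iff_bounded ennreal_mult[symmetric] normal_density_nonneg)
qed

lemma nn_integral_radial_gauss_moment_nonzero:
  "(\<integral>\<^sup>+r. ennreal (real DIM('a::euclidean_space) * r ^ (DIM('a) - 1)) * indicator {0..} r *
      ennreal (r powr p * exp (- r\<^sup>2 / 2)) \<partial>lborel) \<noteq> 0"
    (is "integral\<^sup>N lborel ?f \<noteq> 0")
proof
  assume "integral\<^sup>N lborel ?f = 0"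
  then have "AE r in lborel. ennreal (real DIM('a) * r ^ (DIM('a) - 1)) * indicator {0..} r *
      ennreal (r powr p * exp (- r\<^sup>2 / 2)) = 0"
    by (subst (asm) nn_integral_0_iff_AE) auto
  then have "AE r in lborel. r \<notin> {0<..1::real}"
    by eventually_elim (auto simp: ennreal_eq_0_iff mult_le_0_iff not_le split: split_indicator
        dest: zero_less_power[of _ "DIM('a) - 1"])
  then have "emeasure lborel {0<..1::real} = 0"
    using emeasure_eq_0_AE[of "\<lambda>r. r \<in> {0<..1::real}" lborel]
    by (simp only: space_lborel space_borel UNIV_I simp_thms Collect_mem_eq)
  then show False by simp
qed

lemma cone_nn_integral_abs_inner_powr_mult:
  fixes e :: "'a::euclidean_space"
  assumes p: "0 \<le> p" and e: "norm e = 1"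
  shows "cone_nn_integral (\<lambda>w. ennreal (\<bar>w \<bullet> e\<bar> powr p))
      * (\<integral>\<^sup>+r. ennreal (real DIM('a) * r ^ (DIM('a) - 1)) * indicator {0..} r
          * ennreal (r powr p * exp (- r\<^sup>2 / 2)) \<partial>lborel)
    = ennreal (sqrt (2 * pi) ^ DIM('a))
      * (\<integral>\<^sup>+t. ennreal (std_normal_density t) * ennreal (\<bar>t\<bar> powr p) \<partial>lborel)"
proof -
  have polar: "indicator (UNIV - {0}) k * ennreal (\<bar>sgn k \<bullet> e\<bar> powr p)
      * ennreal (norm k powr p * exp (- (norm k)\<^sup>2 / 2))
    = ennreal (\<bar>k \<bullet> e\<bar> powr p * exp (- (norm k)\<^sup>2 / 2))" if "k \<noteq> 0" for k :: 'a
  proof -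
    have "\<bar>sgn k \<bullet> e\<bar> * norm k = \<bar>k \<bullet> e\<bar>"
      using that by (simp add: sgn_div_norm abs_mult)
    then show ?thesis
      using that by (simp add: ennreal_mult[symmetric] powr_mult[symmetric] mult.assoc[symmetric])
  qed
  have "cone_nn_integral (\<lambda>w. ennreal (\<bar>w \<bullet> e\<bar> powr p))
      * (\<integral>\<^sup>+r. ennreal (real DIM('a) * r ^ (DIM('a) - 1)) * indicator {0..} r
          * ennreal (r powr p * exp (- r\<^sup>2 / 2)) \<partial>lborel)
    = (\<integral>\<^sup>+k. ennreal (\<bar>k \<bullet> e\<bar> powr p * exp (- (norm k)\<^sup>2 / 2)) \<partial>lborel)"
    by (subst nn_integral_polar[symmetric])
      (use cone_nn_integral_abs_inner_powr_finite[OF p e] AE_lborel_singleton[of "0::'a"] polar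
        in \<open>auto intro!: nn_integral_cong_AE elim!: eventually_mono\<close>)
  also have "\<dots> = ennreal (sqrt (2 * pi) ^ DIM('a))
      * (\<integral>\<^sup>+t. ennreal (std_normal_density t) * ennreal (\<bar>t\<bar> powr p) \<partial>lborel)"
    by (rule nn_integral_abs_inner_powr_exp[OF e])
  finally show ?thesis .
qed

lemma cone_nn_integral_abs_inner_powr_unit_eq:
  fixes e1 e2 :: "'a::euclidean_space"
  assumes p: "0 \<le> p" and e: "norm e1 = 1" "norm e2 = 1"
  shows "cone_nn_integral (\<lambda>w. ennreal (\<bar>w \<bullet> e1\<bar> powr p))
    = cone_nn_integral (\<lambda>w. ennreal (\<bar>w \<bullet> e2\<bar> powr p))"
proof -
  define C where "C = (\<integral>\<^sup>+r. ennreal (real DIM('a) * r ^ (DIM('a) - 1)) * indicator {0..} r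
    * ennreal (r powr p * exp (- r\<^sup>2 / 2)) \<partial>lborel)"
  define V where "V = ennreal (sqrt (2 * pi) ^ DIM('a))
    * (\<integral>\<^sup>+t. ennreal (std_normal_density t) * ennreal (\<bar>t\<bar> powr p) \<partial>lborel)"
  have CV: "cone_nn_integral (\<lambda>w. ennreal (\<bar>w \<bullet> e\<bar> powr p)) * C = V" if "norm e = 1" for e :: 'a
    unfolding C_def V_def using p that by (rule cone_nn_integral_abs_inner_powr_mult)
  have "V < \<infinity>"
    unfolding V_def using nn_integral_std_normal_abs_powr_finite[OF p]
    by (simp add: ennreal_mult_less_top)
  moreover have "C \<noteq> 0"
    unfolding C_def by (rule nn_integral_radial_gauss_moment_nonzero)
  ultimately show ?thesis
    using CV[OF e(1)] CV[OF e(2)]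
    by (auto simp: mult.commute[of _ C] ennreal_mult_cancel_left ennreal_mult_eq_top_iff)
qed

lemma K_const_eq_cone_nn_integral:
  fixes e :: "'a::euclidean_space"
  assumes p: "0 \<le> p" and e: "norm e = 1"
  shows "K_const TYPE('a) p
    = real DIM('a) * enn2real (cone_nn_integral (\<lambda>w. ennreal (\<bar>w \<bullet> e\<bar> powr p)))"
proof -
  define e0 where "e0 = (SOME e::'a. e \<in> Basis)"
  have "e0 \<in> Basis" unfolding e0_def by (rule someI_ex) (use nonempty_Basis in blast)
  then have "cone_nn_integral (\<lambda>w. ennreal (\<bar>w \<bullet> e0\<bar> powr p))
      = cone_nn_integral (\<lambda>w. ennreal (\<bar>w \<bullet> e\<bar> powr p))"
    using p e by (intro cone_nn_integral_abs_inner_powr_unit_eq) auto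
  then show ?thesis
    unfolding K_const_def Let_def e0_def[symmetric]
    by (subst integral_sphere_measure_eq_cone_nn_integral) auto
qed

section \<open>Blow-up at \<open>x\<close>\<close>

lemma nn_integral_ball_abs_inner_powr:
  fixes v :: "'a::euclidean_space"
  assumes p: "0 < p" and s: "s < 1" and v: "v \<noteq> 0"
  shows "(\<integral>\<^sup>+k. ennreal (indicator (ball 0 1) k * (\<bar>v \<bullet> k\<bar> / norm k powr s) powr p
        / norm k ^ DIM('a)) \<partial>lborel)
    = cone_nn_integral (\<lambda>w. ennreal (\<bar>w \<bullet> sgn v\<bar> powr p))
      * ennreal (real DIM('a) * norm v powr p / (p * (1 - s)))"
proof -
  define \<psi> where "\<psi> = (\<lambda>w::'a. ennreal (\<bar>w \<bullet> sgn v\<bar> powr p))"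
  have [measurable]: "\<psi> \<in> borel_measurable borel" unfolding \<psi>_def by measurable
  have integrand:
    "ennreal (indicator (ball 0 1) k * (\<bar>v \<bullet> k\<bar> / norm k powr s) powr p / norm k ^ DIM('a))
      = indicator (ball 0 1 - {0}) k * \<psi> (sgn k)
        * ennreal (norm v powr p * norm k powr (p * (1 - s)) / norm k ^ DIM('a))" for k
  proof (cases "k \<in> ball 0 1 - {0}")
    case True
    then have k: "0 < norm k" by simp
    have "\<bar>v \<bullet> k\<bar> = norm v * (\<bar>sgn k \<bullet> sgn v\<bar> * norm k)"
      using v k by (simp add: sgn_div_norm abs_mult inner_commute)
    then have "\<bar>v \<bullet> k\<bar> / norm k powr s = \<bar>sgn k \<bullet> sgn v\<bar> * (norm v * norm k powr (1 - s))"
      using k by (simp add: powr_diff field_simps)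
    then have "(\<bar>v \<bullet> k\<bar> / norm k powr s) powr p
        = \<bar>sgn k \<bullet> sgn v\<bar> powr p * (norm v powr p * norm k powr (p * (1 - s)))"
      by (simp add: powr_mult powr_powr mult_ac)
    then show ?thesis
      using True unfolding \<psi>_def by (simp add: ennreal_mult[symmetric] mult.assoc)
  qed (auto split: split_indicator)
  have "cone_nn_integral \<psi> < \<infinity>"
    unfolding \<psi>_def using p v
    by (intro cone_nn_integral_abs_inner_powr_finite) (auto simp: norm_sgn)
  then show ?thesis
    unfolding integrand
    using nn_integral_polar_weight_powr[of "p * (1 - s)" "norm v powr p", where 'a='a] p s
    by (subst nn_integral_polar_ball) (auto simp: \<psi>_def)
qed

lemma integral_ball_abs_inner_powr:
  fixes v :: "'a::euclidean_space"
  assumes p: "0 < p" and s: "s < 1"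
  shows "p * (1 - s) *
      (\<integral>k. indicator (ball 0 1) k * (\<bar>v \<bullet> k\<bar> / norm k powr s) powr p / norm k ^ DIM('a) \<partial>lborel)
    = K_const TYPE('a) p * norm v powr p"
proof (cases "v = 0")
  case False
  have [measurable]: "ball (0::'a) 1 \<in> sets borel" by simp
  have "(\<integral>k. indicator (ball 0 1) k * (\<bar>v \<bullet> k\<bar> / norm k powr s) powr p / norm k ^ DIM('a) \<partial>lborel)
      = enn2real (cone_nn_integral (\<lambda>w. ennreal (\<bar>w \<bullet> sgn v\<bar> powr p)))
        * (real DIM('a) * norm v powr p / (p * (1 - s)))"
    by (subst integral_eq_nn_integral)
       (use p s False in
         \<open>auto simp: nn_integral_ball_abs_inner_powr enn2real_mult split: split_indicator\<close>)
  moreover have "K_const TYPE('a) p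
      = real DIM('a) * enn2real (cone_nn_integral (\<lambda>w. ennreal (\<bar>w \<bullet> sgn v\<bar> powr p)))"
    using p False by (intro K_const_eq_cone_nn_integral) (auto simp: norm_sgn)
  ultimately show ?thesis using p s by (simp add: field_simps)
qed simp

lemma set_integral_ball_rescale:
  fixes F :: "'a::euclidean_space \<Rightarrow> real"
  assumes [measurable]: "F \<in> borel_measurable borel" and d: "0 < d"
  shows "(LINT y : ball x d | lborel. F y)
    = (\<integral>k. d ^ DIM('a) * (indicator (ball 0 1) k * F (x + d *\<^sub>R k)) \<partial>lborel)"
proof -
  have [measurable]: "ball x d \<in> sets borel" by simp
  have "(LINT y : ball x d | lborel. F y)
      = (\<integral>y. indicator (ball x d) y * F y
          \<partial>density (distr lborel borel (\<lambda>k. x + d *\<^sub>R k)) (\<lambda>_. ennreal (\<bar>d\<bar> ^ DIM('a))))"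
    using lborel_affine[of d x] d by (simp add: set_lebesgue_integral_def)
  also have "\<dots> = (\<integral>y. \<bar>d\<bar> ^ DIM('a) *\<^sub>R (indicator (ball x d) y * F y)
      \<partial>distr lborel borel (\<lambda>k. x + d *\<^sub>R k))"
    by (rule integral_density) (simp_all, measurable)
  also have "\<dots> = (\<integral>k. d ^ DIM('a) * (indicator (ball x d) (x + d *\<^sub>R k) * F (x + d *\<^sub>R k)) \<partial>lborel)"
    using d by (subst integral_distr) auto
  also have "\<dots> = (\<integral>k. d ^ DIM('a) * (indicator (ball 0 1) k * F (x + d *\<^sub>R k)) \<partial>lborel)"
    using d by (intro Bochner_Integration.integral_cong)
      (auto simp: dist_norm split: split_indicator)
  finally show ?thesis .
qed

definition difference_ratio :: "('a::euclidean_space \<Rightarrow> real) \<Rightarrow> 'a \<Rightarrow> real \<Rightarrow> real \<Rightarrow> 'a \<Rightarrow> real" where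
  "difference_ratio u x s d k = \<bar>u (x + d *\<^sub>R k) - u x\<bar> / (\<bar>d\<bar> * norm k powr s)"

text \<open>The integrand over \<open>B(x,\<delta>)\<close> after the substitution \<open>y = x + \<delta> k\<close> and division by
  \<open>G(\<delta>\<^sup>1\<^sup>-\<^sup>s)\<close>. Only \<open>\<delta> > 0\<close> matters; the absolute values keep the argument of \<open>G\<close>
  nonnegative, so that the integrand is measurable for every \<open>\<delta>\<close>.\<close>
definition blowup_integrand ::
    "(real \<Rightarrow> real) \<Rightarrow> ('a::euclidean_space \<Rightarrow> real) \<Rightarrow> 'a \<Rightarrow> real \<Rightarrow> real \<Rightarrow> 'a \<Rightarrow> real" where
  "blowup_integrand G u x s d k = indicator (ball 0 1) k *
     (G (\<bar>d\<bar> powr (1 - s) * difference_ratio u x s d k) / G (\<bar>d\<bar> powr (1 - s))) / norm k ^ DIM('a)"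

lemma difference_ratio_nonneg: "0 \<le> difference_ratio u x s d k"
  unfolding difference_ratio_def by simp

lemma rescaled_integrand_eq:
  fixes u :: "'a::euclidean_space \<Rightarrow> real"
  assumes d: "0 < d"
  shows "d ^ DIM('a) * (indicator (ball 0 1) k *
      (G (\<bar>u x - u (x + d *\<^sub>R k)\<bar> / dist x (x + d *\<^sub>R k) powr s) / dist x (x + d *\<^sub>R k) ^ DIM('a)))
    = indicator (ball 0 1) k * G (d powr (1 - s) * difference_ratio u x s d k) / norm k ^ DIM('a)"
proof (cases "k = 0")
  case False
  then have k: "0 < norm k" by simp
  have dist: "dist x (x + d *\<^sub>R k) = d * norm k" using d by (simp add: dist_norm)
  have "\<bar>u x - u (x + d *\<^sub>R k)\<bar> / (d * norm k) powr s = d powr (1 - s) * difference_ratio u x s d k"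
    using d k by (simp add: difference_ratio_def powr_mult powr_diff abs_minus_commute field_simps)
  moreover have "d ^ DIM('a) * (A / (d * norm k) ^ DIM('a)) = A / norm k ^ DIM('a)" for A
    using d k by (simp add: power_mult_distrib)
  ultimately show ?thesis unfolding dist by simp
qed simp

lemma gagliardo_ball_rescale:
  fixes u :: "'a::euclidean_space \<Rightarrow> real"
  assumes G: "orlicz G" and u: "continuous_on UNIV u" and d: "0 < d"
  shows "(LINT y : ball x d | lborel. G (\<bar>u x - u y\<bar> / dist x y powr s) / dist x y ^ DIM('a))
      / G (d powr (1 - s))
    = (\<integral>k. blowup_integrand G u x s d k \<partial>lborel)"
proof -
  have [measurable]: "u \<in> borel_measurable borel"
    using u by (rule borel_measurable_continuous_onI)
  have "(\<lambda>y. G (\<bar>u x - u y\<bar> / dist x y powr s)) \<in> borel_measurable borel"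
    by (rule orlicz_comp_measurable[OF G]) auto
  then have meas:
      "(\<lambda>y. G (\<bar>u x - u y\<bar> / dist x y powr s) / dist x y ^ DIM('a)) \<in> borel_measurable borel"
    by measurable
  have "(LINT y : ball x d | lborel. G (\<bar>u x - u y\<bar> / dist x y powr s) / dist x y ^ DIM('a))
      = (\<integral>k. indicator (ball 0 1) k * G (d powr (1 - s) * difference_ratio u x s d k)
            / norm k ^ DIM('a) \<partial>lborel)"
    unfolding set_integral_ball_rescale[OF meas d]
      rescaled_integrand_eq[where G=G, OF d] ..
  then show ?thesis
    unfolding blowup_integrand_def
    by (simp flip: integral_divide_zero add: mult.commute abs_of_pos[OF d])
qed

lemma blowup_integrand_tendsto:
  fixes u :: "'a::euclidean_space \<Rightarrow> real"
  assumes H: "hyp_H G p" and s: "s < 1" and D: "(u has_derivative blinfun_apply D) (at x)"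
  shows "((\<lambda>d. blowup_integrand G u x s d k) \<longlongrightarrow>
      indicator (ball 0 1) k * (\<bar>grad u x \<bullet> k\<bar> / norm k powr s) powr p / norm k ^ DIM('a))
    (at_right 0)"
proof (cases "k \<in> ball 0 1 - {0}")
  case True
  have "filterlim (\<lambda>d::real. d powr (1 - s)) (at_right 0) (at_right 0)"
  proof (rule tendsto_imp_filterlim_at_right)
    show "((\<lambda>d::real. d powr (1 - s)) \<longlongrightarrow> 0) (at_right 0)"
      using s eventually_at_right_less[of "0::real"]
      by (intro tendsto_zero_powrI tendsto_ident_at) (auto elim: eventually_mono)
  qed (use eventually_at_right_less[of "0::real"] in \<open>auto elim: eventually_mono\<close>)
  moreover have "((\<lambda>d. difference_ratio u x s d k) \<longlongrightarrow> \<bar>grad u x \<bullet> k\<bar> / norm k powr s) (at_right 0)"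
  proof (rule Lim_transform_eventually)
    show "((\<lambda>d. \<bar>(u (x + d *\<^sub>R k) - u x) / d\<bar> / norm k powr s) \<longlongrightarrow> \<bar>grad u x \<bullet> k\<bar> / norm k powr s)
        (at_right 0)"
      using has_derivative_difference_quotient_tendsto[OF D, of k] True
      by (intro tendsto_intros) (auto simp: has_derivative_eq_inner_grad[OF D])
    show "\<forall>\<^sub>F d in at_right 0.
        \<bar>(u (x + d *\<^sub>R k) - u x) / d\<bar> / norm k powr s = difference_ratio u x s d k"
      using eventually_at_right_less[of "0::real"]
      by eventually_elim (simp add: difference_ratio_def abs_divide)
  qed
  ultimately have "((\<lambda>d. G (d powr (1 - s) * difference_ratio u x s d k) / G (d powr (1 - s)))
      \<longlongrightarrow> (\<bar>grad u x \<bullet> k\<bar> / norm k powr s) powr p) (at_right 0)"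
    by (rule hyp_H_ratio_tendsto[OF H]) (auto simp: difference_ratio_nonneg)
  moreover have "\<forall>\<^sub>F d in at_right 0.
      G (d powr (1 - s) * difference_ratio u x s d k) / G (d powr (1 - s))
      = G (\<bar>d\<bar> powr (1 - s) * difference_ratio u x s d k) / G (\<bar>d\<bar> powr (1 - s))"
    using eventually_at_right_less[of "0::real"] by eventually_elim simp
  ultimately have "((\<lambda>d. G (\<bar>d\<bar> powr (1 - s) * difference_ratio u x s d k) / G (\<bar>d\<bar> powr (1 - s)))
      \<longlongrightarrow> (\<bar>grad u x \<bullet> k\<bar> / norm k powr s) powr p) (at_right 0)"
    by (rule Lim_transform_eventually)
  then show ?thesis
    unfolding blowup_integrand_def
    by (rule tendsto_divide[OF tendsto_mult[OF tendsto_const] tendsto_const]) (use True in simp)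
qed (auto simp: blowup_integrand_def power_0_left split: split_indicator)

lemma blowup_integrand_bound:
  fixes u :: "'a::euclidean_space \<Rightarrow> real"
  assumes G: "orlicz G" and pos: "\<And>t. 0 < t \<Longrightarrow> 0 < G t" and s: "s < 1"
    and lip: "\<And>y. y \<in> cball x 1 \<Longrightarrow> \<bar>u y - u x\<bar> \<le> L * norm (y - x)" "0 \<le> L"
    and ratio: "\<And>t b. 0 < t \<Longrightarrow> 0 \<le> b \<Longrightarrow> b \<le> L \<Longrightarrow> G (t * b) / G t \<le> C * b" "0 \<le> C"
    and d: "0 < d" "d \<le> 1"
  shows "\<bar>blowup_integrand G u x s d k\<bar>
    \<le> indicator (ball 0 1) k * (C * L * norm k powr (1 - s)) / norm k ^ DIM('a)"
proof (cases "k \<in> ball 0 1 - {0}")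
  case True
  then have k: "norm k < 1" "0 < norm k" by auto
  define q where "q = difference_ratio u x s d k"
  have q0: "0 \<le> q" unfolding q_def by (rule difference_ratio_nonneg)
  have "\<bar>u (x + d *\<^sub>R k) - u x\<bar> \<le> L * (d * norm k)"
    using lip(1)[of "x + d *\<^sub>R k"] d k by (simp add: dist_norm mult_le_one)
  then have "q \<le> L * (d * norm k) / (d * norm k powr s)"
    unfolding q_def difference_ratio_def abs_of_pos[OF d(1)]
    by (rule divide_right_mono) (use d k in auto)
  also have "\<dots> = L * norm k powr (1 - s)"
    using d k by (simp add: powr_diff field_simps)
  finally have qL: "q \<le> L * norm k powr (1 - s)" .
  moreover have "L * norm k powr (1 - s) \<le> L"
    using k s lip(2) by (intro mult_left_le powr_le1) auto
  ultimately have "G (d powr (1 - s) * q) / G (d powr (1 - s)) \<le> C * q"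
    using ratio(1) d q0 by simp
  also have "\<dots> \<le> C * L * norm k powr (1 - s)"
    using qL ratio(2) by (simp add: mult_left_mono mult.assoc)
  finally have "G (d powr (1 - s) * q) / G (d powr (1 - s)) / norm k ^ DIM('a)
      \<le> C * L * norm k powr (1 - s) / norm k ^ DIM('a)"
    by (rule divide_right_mono) simp
  moreover have "\<bar>blowup_integrand G u x s d k\<bar>
      = G (d powr (1 - s) * q) / G (d powr (1 - s)) / norm k ^ DIM('a)"
    using True d q0 pos[of "d powr (1 - s)"] orlicz_nonneg[OF G, of "d powr (1 - s) * q"]
    unfolding blowup_integrand_def q_def[symmetric] by (simp add: abs_mult)
  ultimately show ?thesis using True by simp
qed (auto simp: blowup_integrand_def split: split_indicator)

lemma integral_blowup_integrand_tendsto: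
  fixes u :: "'a::euclidean_space \<Rightarrow> real"
  assumes H: "hyp_H G p" and s: "s < 1" and u: "C2c u"
  shows "((\<lambda>d. \<integral>k. blowup_integrand G u x s d k \<partial>lborel) \<longlongrightarrow>
      (\<integral>k. indicator (ball 0 1) k * (\<bar>grad u x \<bullet> k\<bar> / norm k powr s) powr p / norm k ^ DIM('a)
        \<partial>lborel)) (at_right 0)"
proof -
  note G = hyp_H_orlicz[OF H] and pos = hyp_H_pos[OF H]
  obtain D where D: "\<And>x. (u has_derivative blinfun_apply (D x)) (at x)"
    and cD: "continuous_on UNIV D"
    using C2c_obtains_continuous_derivative[OF u] by blast
  obtain L where L: "0 \<le> L" "\<And>y. y \<in> cball x 1 \<Longrightarrow> \<bar>u y - u x\<bar> \<le> L * norm (y - x)"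
    using continuous_derivative_lipschitz_on_cball[OF D cD] by blast
  obtain C where C: "1 \<le> C" "\<And>t b. 0 < t \<Longrightarrow> 0 \<le> b \<Longrightarrow> b \<le> L \<Longrightarrow> G (t * b) / G t \<le> C * b"
    using orlicz_ratio_le_linear[OF G pos] by blast
  have [measurable]: "u \<in> borel_measurable borel" "ball (0::'a) 1 \<in> sets borel"
    using borel_measurable_continuous_onI[OF C2c_imp_continuous_on[OF u]] by auto
  define w where "w k = indicator (ball 0 1) k * (C * L * norm k powr (1 - s)) / norm k ^ DIM('a)"
    for k :: 'a
  show ?thesis
    unfolding at_right_to_top filterlim_filtermap
  proof (rule integral_dominated_convergence_at_top[where w=w])
    show "(\<lambda>k. blowup_integrand G u x s (inverse T) k) \<in> borel_measurable lborel" for T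
    proof -
      have "(\<lambda>k. G (\<bar>inverse T\<bar> powr (1 - s) * difference_ratio u x s (inverse T) k))
          \<in> borel_measurable borel"
        by (intro orlicz_comp_measurable[OF G]) (auto simp: difference_ratio_def)
      then show ?thesis unfolding blowup_integrand_def by measurable
    qed
    show "integrable lborel w"
      unfolding w_def using s L C by (intro integrable_ball_norm_powr_singular) auto
    show "AE k in lborel. ((\<lambda>T. blowup_integrand G u x s (inverse T) k) \<longlongrightarrow>
        indicator (ball 0 1) k * (\<bar>grad u x \<bullet> k\<bar> / norm k powr s) powr p / norm k ^ DIM('a)) at_top"
      by (intro AE_I2 filterlim_compose[OF blowup_integrand_tendsto[OF H s D]
            filterlim_inverse_at_right_top])
    show "\<forall>\<^sub>F T in at_top. AE k in lborel. norm (blowup_integrand G u x s (inverse T) k) \<le> w k"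
      unfolding eventually_at_top_linorder w_def using C
      by (intro exI[of _ 1] allI impI AE_I2)
        (auto simp: inverse_le_1_iff intro!: blowup_integrand_bound[OF G pos s L(2,1) C(2)])
  qed measurable
qed

theorem proposition3p1:
  fixes u :: "'a::euclidean_space \<Rightarrow> real" and G :: "real \<Rightarrow> real"
    and s p :: real and x :: 'a
  assumes "0 < s" "s < 1"
    and "hyp_H G p"
    and "C2c u"
  shows "((\<lambda>\<delta>. p * (1 - s) / G (\<delta> powr (1 - s)) *
            (LINT y : ball x \<delta> | lborel.
               G (\<bar>u x - u y\<bar> / dist x y powr s) / dist x y ^ DIM('a)))
          \<longlongrightarrow> K_const TYPE('a) p * norm (grad u x) powr p) (at_right 0)"
proof -
  have "((\<lambda>\<delta>. p * (1 - s) * (\<integral>k. blowup_integrand G u x s \<delta> k \<partial>lborel))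
      \<longlongrightarrow> K_const TYPE('a) p * norm (grad u x) powr p) (at_right 0)"
    using tendsto_mult_left[OF integral_blowup_integrand_tendsto[OF assms(3,2,4)],
        of "p * (1 - s)" x]
      integral_ball_abs_inner_powr[of p s "grad u x"] hyp_H_index_gt_1[OF assms(3)] assms(2)
    by simp
  moreover have "\<forall>\<^sub>F \<delta> in at_right 0. p * (1 - s) * (\<integral>k. blowup_integrand G u x s \<delta> k \<partial>lborel)
      = p * (1 - s) / G (\<delta> powr (1 - s)) *
        (LINT y : ball x \<delta> | lborel. G (\<bar>u x - u y\<bar> / dist x y powr s) / dist x y ^ DIM('a))"
    using eventually_at_right_less[of "0::real"]
  proof eventually_elim
    case (elim \<delta>)
    then show ?case
      using gagliardo_ball_rescale[OF hyp_H_orlicz[OF assms(3)] C2c_imp_continuous_on[OF assms(4)],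
          of \<delta> x s, symmetric]
      by simp
  qed
  ultimately show ?thesis by (rule Lim_transform_eventually)
qed

end
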